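(* Let $r\le n$ and let $A$ be an $r\times n$ matrix over a local ring $(R,\mathfrak{m})$. If all $r\times r$ minors of $A$ vanish and the corank of $A\pmod{\mathfrak{m}}$ is $1$, then the left kernel of $A$ is a free $R$-module of rank $1$.
   Context: The corank of an $r\times n$ matrix (with $r\le n$) over the residue field means $r$ minus its rank; the left kernel of $A$ is $\{v\in R^r: v^TA=0\}$. *)

theory Defs
  imports "Jordan_Normal_Form.Determinant" "Jordan_Normal_Form.DL_Submatrix"
begin

definition is_ideal :: "'a::comm_ring_1 set \<Rightarrow> bool" where
  "is_ideal I \<longleftrightarrow> 0 \<in> I \<and> (\<forall>x\<in>I. \<forall>y\<in>I. x + y \<in> I) \<and> (\<forall>a. \<forall>x\<in>I. a * x \<in> I)"

definition maximal_ideal :: "'a::comm_ring_1 set \<Rightarrow> bool" where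
  "maximal_ideal I \<longleftrightarrow> is_ideal I \<and> I \<noteq> UNIV \<and>
     (\<forall>J. is_ideal J \<and> I \<subseteq> J \<longrightarrow> J = I \<or> J = UNIV)"

definition local_ring :: "'a::comm_ring_1 itself \<Rightarrow> bool" where
  "local_ring _ \<longleftrightarrow> (\<exists>!m::'a set. maximal_ideal m)"

text \<open>Rank of the reduction of A modulo m, over the residue field R/m, as the maximal
  number of rows of A whose reductions are linearly independent over R/m.
  A linear relation over R/m among reduced rows with index set S lifts to coefficients
  c_i in R with sum_i c_i * row_i in m^n; nontriviality means some c_i is not in m.\<close>
definition rows_indep_mod :: "'a::comm_ring_1 set \<Rightarrow> 'a mat \<Rightarrow> nat set \<Rightarrow> bool" where
  "rows_indep_mod m A S \<longleftrightarrow>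
     (\<forall>c::nat \<Rightarrow> 'a. (\<forall>j<dim_col A. (\<Sum>i\<in>S. c i * A $$ (i, j)) \<in> m) \<longrightarrow> (\<forall>i\<in>S. c i \<in> m))"

definition rank_mod :: "'a::comm_ring_1 set \<Rightarrow> 'a mat \<Rightarrow> nat" where
  "rank_mod m A = Max {card S | S. S \<subseteq> {..<dim_row A} \<and> rows_indep_mod m A S}"

definition corank_mod :: "'a::comm_ring_1 set \<Rightarrow> 'a mat \<Rightarrow> nat" where
  "corank_mod m A = dim_row A - rank_mod m A"

definition left_kernel :: "'a::comm_ring_1 mat \<Rightarrow> 'a vec set" where
  "left_kernel A = {v \<in> carrier_vec (dim_row A). transpose_mat A *\<^sub>v v = 0\<^sub>v (dim_col A)}"

definition free_rank_one :: "'a::comm_ring_1 vec set \<Rightarrow> bool" where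
  "free_rank_one K \<longleftrightarrow> (\<exists>w\<in>K. \<forall>v\<in>K. \<exists>!c. v = c \<cdot>\<^sub>v w)"

end

theory Submission
  imports Defs
begin

text \<open>
  Choose r - 1 rows of A that stay independent modulo m, and let k be the remaining row. Gaussian
  elimination over the local ring (every element outside m is a unit) yields columns on which these
  rows have a unit (r-1) x (r-1) minor det N. Let w be the vector of cofactors along the last column
  of the r x r matrix formed by these columns and one further column: pairing w with any column
  of A computes an r x r minor of A, which vanishes, so w lies in the left kernel, and
  w_k = +-det N is a unit. A kernel vector vanishing at k restricts to a vector in the left kernel
  of N, which is trivial since det N is a unit; hence every kernel vector v equals (v_k / w_k) w.
\<close>

section \<open>Maximal ideals and local rings\<close>

lemma maximal_ideal_one_notin:
  assumes "maximal_ideal (m::'a::comm_ring_1 set)"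
  shows "1 \<notin> m"
proof
  assume "1 \<in> m"
  then have "a \<in> m" for a
    using assms unfolding maximal_ideal_def is_ideal_def by (metis mult.right_neutral)
  then show False
    using assms unfolding maximal_ideal_def by auto
qed

lemma is_ideal_Union_chain:
  assumes "C \<noteq> {}" and "\<forall>I\<in>C. \<forall>J\<in>C. I \<subseteq> J \<or> J \<subseteq> I" and "\<forall>I\<in>C. is_ideal I"
  shows "is_ideal (\<Union>C)"
  unfolding is_ideal_def
proof (intro conjI ballI allI)
  show "0 \<in> \<Union>C"
    using assms(1,3) unfolding is_ideal_def by blast
next
  fix x y assume "x \<in> \<Union>C" "y \<in> \<Union>C"
  then obtain I J where "I \<in> C" "J \<in> C" "x \<in> I" "y \<in> J" by blast
  with assms(2,3) show "x + y \<in> \<Union>C"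
    unfolding is_ideal_def by (metis UnionI subsetD)
next
  fix a x assume "x \<in> \<Union>C"
  with assms(3) show "a * x \<in> \<Union>C"
    unfolding is_ideal_def by blast
qed

lemma ideal_subset_maximal_ideal:
  fixes I :: "'a::comm_ring_1 set"
  assumes "is_ideal I" and "1 \<notin> I"
  obtains M where "maximal_ideal M" and "I \<subseteq> M"
proof -
  define F where "F = {J. is_ideal J \<and> I \<subseteq> J \<and> 1 \<notin> J}"
  have "\<exists>M\<in>F. \<forall>J\<in>F. M \<subseteq> J \<longrightarrow> J = M"
  proof (rule subset_Zorn_nonempty)
    show "F \<noteq> {}"
      using assms unfolding F_def by blast
    show "\<Union>C \<in> F" if "C \<noteq> {}" and "subset.chain F C" for C
      using that is_ideal_Union_chain[of C] unfolding F_def subset_chain_def by blast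
  qed
  then obtain M where M: "M \<in> F" and M_max: "\<forall>J\<in>F. M \<subseteq> J \<longrightarrow> J = M" ..
  have "maximal_ideal M"
    unfolding maximal_ideal_def
  proof (intro conjI allI impI)
    show "is_ideal M" and "M \<noteq> UNIV"
      using M unfolding F_def by auto
    fix J assume J: "is_ideal J \<and> M \<subseteq> J"
    show "J = M \<or> J = UNIV"
    proof (cases "1 \<in> J")
      case True
      then have "a \<in> J" for a
        using J unfolding is_ideal_def by (metis mult.right_neutral)
      then show ?thesis by auto
    next
      case False
      then show ?thesis
        using J M M_max unfolding F_def by blast
    qed
  qed
  with M show ?thesis
    using that unfolding F_def by blast
qed

lemma local_ring_unit_if_notin_maximal_ideal:
  fixes m :: "'a::comm_ring_1 set"
  assumes "local_ring TYPE('a)" and "maximal_ideal m" and "x \<notin> m"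
  obtains y where "x * y = 1"
proof -
  have "\<exists>y. x * y = 1"
  proof (rule ccontr)
    assume no_inverse: "\<nexists>y. x * y = 1"
    define I where "I = range (\<lambda>a. a * x)"
    have "is_ideal I"
      unfolding is_ideal_def I_def
      by (auto simp: distrib_right[symmetric] intro: range_eqI[of _ _ 0]) (metis mult.assoc rangeI)
    moreover have "1 \<notin> I"
      using no_inverse unfolding I_def by (auto simp: mult.commute)
    ultimately obtain M where "maximal_ideal M" and "I \<subseteq> M"
      by (rule ideal_subset_maximal_ideal)
    then have "M = m"
      using assms(1,2) unfolding local_ring_def by blast
    moreover have "x \<in> I"
      unfolding I_def using rangeI[of "\<lambda>a. a * x" 1] by simp
    ultimately show False
      using \<open>I \<subseteq> M\<close> assms(3) by blast
  qed
  with that show thesis by blast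
qed

section \<open>Column selections and maximal minors\<close>

definition select_cols :: "'a mat \<Rightarrow> nat \<Rightarrow> (nat \<Rightarrow> nat) \<Rightarrow> 'a mat" where
  "select_cols A q f = mat (dim_row A) q (\<lambda>(i, l). A $$ (i, f l))"

definition delete_row :: "'a mat \<Rightarrow> nat \<Rightarrow> 'a mat" where
  "delete_row A k = mat (dim_row A - 1) (dim_col A) (\<lambda>(i, j). A $$ (insert_index k i, j))"

definition delete_entry :: "'a vec \<Rightarrow> nat \<Rightarrow> 'a vec" where
  "delete_entry v k = vec (dim_vec v - 1) (\<lambda>i. v $ insert_index k i)"

lemma delete_row_carrier [simp]: "A \<in> carrier_mat (Suc p) n \<Longrightarrow> delete_row A k \<in> carrier_mat p n"
  by (simp add: delete_row_def)

lemma select_cols_carrier [simp]: "A \<in> carrier_mat r n \<Longrightarrow> select_cols A q f \<in> carrier_mat r q"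
  by (simp add: select_cols_def)

lemma dim_select_cols [simp]: "dim_row (select_cols A q f) = dim_row A" "dim_col (select_cols A q f) = q"
  by (simp_all add: select_cols_def)

lemma index_select_cols [simp]: "i < dim_row A \<Longrightarrow> l < q \<Longrightarrow> select_cols A q f $$ (i, l) = A $$ (i, f l)"
  by (simp add: select_cols_def)

lemma det_select_cols_permutes:
  assumes A: "A \<in> carrier_mat r r" and p: "p permutes {..<r}"
  shows "det (select_cols A r p) = signof p * det A"
proof -
  have p_lt: "p j < r" if "j < r" for j
    using permutes_in_image[OF p] that by simp
  have "select_cols A r p = transpose_mat (mat r r (\<lambda>(i, j). transpose_mat A $$ (p i, j)))"
    using A p_lt by (intro eq_matI) (auto simp: select_cols_def)
  then have "det (select_cols A r p) = det (mat r r (\<lambda>(i, j). transpose_mat A $$ (p i, j)))"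
    by (simp add: det_transpose[where n = r])
  also have "\<dots> = signof p * det A"
    using det_permute_rows[of "transpose_mat A" r p] A p det_transpose[OF A]
    by (simp add: lessThan_atLeast0)
  finally show ?thesis .
qed

lemma pick_lessThan:
  assumes "i < r"
  shows "pick {..<r} i = i"
proof -
  have "{a \<in> {..<r}. a < i} = {..<i}"
    using assms by auto
  then show ?thesis
    using pick_card_in_set[of i "{..<r}"] assms by simp
qed

lemma submatrix_lessThan_rows:
  assumes A: "A \<in> carrier_mat r n" and J: "J \<subseteq> {..<n}"
  shows "submatrix A {..<r} J \<in> carrier_mat r (card J)"
    and "i < r \<Longrightarrow> l < card J \<Longrightarrow> submatrix A {..<r} J $$ (i, l) = A $$ (i, pick J l)"
proof -
  have rows: "{i. i < dim_row A \<and> i \<in> {..<r}} = {..<r}" and cols: "{j. j < dim_col A \<and> j \<in> J} = J"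
    using A J by auto
  show "submatrix A {..<r} J \<in> carrier_mat r (card J)"
    by (rule carrier_matI) (simp_all only: dim_submatrix rows cols card_lessThan)
  show "submatrix A {..<r} J $$ (i, l) = A $$ (i, pick J l)" if "i < r" "l < card J"
    using that by (subst submatrix_index) (simp_all only: rows cols card_lessThan pick_lessThan)
qed

lemma select_cols_eq_permuted_minor:
  assumes A: "A \<in> carrier_mat r n" and inj: "inj_on f {..<r}" and f: "\<forall>l<r. f l < n"
  obtains p where "p permutes {..<r}"
    and "select_cols A r f = select_cols (submatrix A {..<r} (f ` {..<r})) r p"
proof -
  define J where "J = f ` {..<r}"
  have card_J: "card J = r"
    unfolding J_def using inj card_image by fastforce
  have J: "J \<subseteq> {..<n}"
    using f unfolding J_def by auto
  define S where "S = submatrix A {..<r} J"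
  have S_dims: "dim_row S = r" "dim_col S = r"
    using submatrix_lessThan_rows(1)[OF A J] card_J unfolding S_def by auto
  have S_index: "S $$ (i, l) = A $$ (i, pick J l)" if "i < r" "l < r" for i l
    using submatrix_lessThan_rows(2)[OF A J] that card_J unfolding S_def by simp
  \<comment> \<open>p sends a column index l to the position of f l within J\<close>
  define p where "p l = (if l < r then card {a \<in> J. a < f l} else l)" for l
  have pick_p: "pick J (p l) = f l" if "l < r" for l
    using pick_card_in_set[of "f l" J] that unfolding p_def J_def by auto
  have p_lt: "p l < r" if "l < r" for l
  proof -
    have "{a \<in> J. a < f l} \<subset> J"
      using that unfolding J_def by auto
    then have "card {a \<in> J. a < f l} < card J"
      unfolding J_def by (simp add: psubset_card_mono)
    then show ?thesis
      unfolding p_def using that card_J by simp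
  qed
  have "inj_on p {..<r}"
    using inj pick_p by (intro inj_onI) (metis inj_on_eq_iff lessThan_iff)
  then have "p ` {..<r} = {..<r}"
    using p_lt by (intro endo_inj_surj) auto
  then have "p permutes {..<r}"
    using \<open>inj_on p {..<r}\<close> by (intro bij_imp_permutes) (auto simp: bij_betw_def p_def)
  moreover have "select_cols A r f = select_cols S r p"
    using A S_dims p_lt by (intro eq_matI) (auto simp: select_cols_def S_index pick_p)
  ultimately show ?thesis
    using that unfolding S_def J_def by blast
qed

lemma det_select_cols_eq_0_if_maximal_minors_vanish:
  assumes A: "A \<in> carrier_mat r n"
    and minors: "\<forall>J. J \<subseteq> {..<n} \<and> card J = r \<longrightarrow> det (submatrix A {..<r} J) = 0"
    and f: "\<forall>l<r. f l < n"
  shows "det (select_cols A r f) = 0"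
proof (cases "inj_on f {..<r}")
  case False
  then obtain l1 l2 where "l1 < r" "l2 < r" "l1 \<noteq> l2" "f l1 = f l2"
    unfolding inj_on_def by auto
  then show ?thesis
    using det_identical_columns[of "select_cols A r f" r l1 l2] A by (auto simp: select_cols_def)
next
  case True
  then obtain p where p: "p permutes {..<r}"
    and eq: "select_cols A r f = select_cols (submatrix A {..<r} (f ` {..<r})) r p"
    using select_cols_eq_permuted_minor[OF A True f] by blast
  have "f ` {..<r} \<subseteq> {..<n}" and "card (f ` {..<r}) = r"
    using f True by (auto simp: card_image)
  then have minor: "det (submatrix A {..<r} (f ` {..<r})) = 0"
    using minors by blast
  have "submatrix A {..<r} (f ` {..<r}) \<in> carrier_mat r r"
    using submatrix_lessThan_rows(1)[OF A \<open>f ` {..<r} \<subseteq> {..<n}\<close>] \<open>card (f ` {..<r}) = r\<close> by simp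
  then show ?thesis
    unfolding eq by (simp add: det_select_cols_permutes[OF _ p] minor)
qed

section \<open>The left kernel\<close>

lemma left_kernel_iff:
  assumes "A \<in> carrier_mat r n"
  shows "v \<in> left_kernel A \<longleftrightarrow> v \<in> carrier_vec r \<and> (\<forall>j<n. (\<Sum>i<r. A $$ (i, j) * v $ i) = 0)"
proof -
  have "(transpose_mat A *\<^sub>v v) $ j = (\<Sum>i<r. A $$ (i, j) * v $ i)"
    if "v \<in> carrier_vec r" and "j < n" for j
    using assms that by (simp add: scalar_prod_def atLeast0LessThan)
  then show ?thesis
    using assms unfolding left_kernel_def by (auto simp: vec_eq_iff)
qed

lemma left_kernel_diff_smult:
  assumes "A \<in> carrier_mat r n" and "v \<in> left_kernel A" and "w \<in> left_kernel A"
  shows "v - c \<cdot>\<^sub>v w \<in> left_kernel A"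
proof -
  have "(\<Sum>i<r. A $$ (i, j) * (v - c \<cdot>\<^sub>v w) $ i)
      = (\<Sum>i<r. A $$ (i, j) * v $ i) - c * (\<Sum>i<r. A $$ (i, j) * w $ i)"
    if "v \<in> carrier_vec r" "w \<in> carrier_vec r" for j
    using that by (simp add: right_diff_distrib sum_subtractf sum_distrib_left mult.left_commute)
  with assms show ?thesis
    unfolding left_kernel_iff[OF assms(1)] by simp
qed

lemma left_kernel_select_cols:
  assumes "A \<in> carrier_mat r n" and "\<forall>l<q. f l < n" and "v \<in> left_kernel A"
  shows "v \<in> left_kernel (select_cols A q f)"
  using assms unfolding left_kernel_iff[OF assms(1)] left_kernel_iff[OF select_cols_carrier[OF assms(1)]]
  by (simp add: select_cols_def)

lemma delete_entry_left_kernel: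
  assumes A: "A \<in> carrier_mat (Suc p) n" and k: "k \<le> p"
    and v: "v \<in> left_kernel A" and v_k: "v $ k = 0"
  shows "delete_entry v k \<in> left_kernel (delete_row A k)"
proof -
  have v_car: "v \<in> carrier_vec (Suc p)"
    using v A unfolding left_kernel_iff[OF A] by blast
  have del_A: "delete_row A k \<in> carrier_mat p n"
    using A by simp
  have split: "{..<Suc p} = insert k (insert_index k ` {..<p})"
    using insert_index_image[of k p] k by (auto simp: lessThan_atLeast0)
  have "(\<Sum>i<p. delete_row A k $$ (i, j) * delete_entry v k $ i) = 0" if "j < n" for j
  proof -
    have "(\<Sum>i<p. delete_row A k $$ (i, j) * delete_entry v k $ i)
        = (\<Sum>i\<in>insert_index k ` {..<p}. A $$ (i, j) * v $ i)"
      using A v_car that by (simp add: sum.reindex[OF insert_index_inj_on] delete_row_def delete_entry_def)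
    also have "\<dots> = (\<Sum>i<Suc p. A $$ (i, j) * v $ i)"
      unfolding split by (subst sum.insert) (auto simp: v_k insert_index_exclude[symmetric])
    also have "\<dots> = 0"
      using v that unfolding left_kernel_iff[OF A] by blast
    finally show ?thesis .
  qed
  then show ?thesis
    using v_car unfolding left_kernel_iff[OF del_A] by (simp add: delete_entry_def)
qed

lemma smult_one_mat_mult_vec:
  assumes "(v :: 'a::comm_ring_1 vec) \<in> carrier_vec p"
  shows "(a \<cdot>\<^sub>m 1\<^sub>m p) *\<^sub>v v = a \<cdot>\<^sub>v v"
  using assms
  by (intro eq_vecI)
     (auto simp: scalar_prod_def mult.assoc if_distrib[of "\<lambda>x. x * _"] sum_distrib_left[symmetric]
           cong: if_cong)

lemma left_kernel_trivial_if_det_unit: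
  assumes B: "B \<in> carrier_mat p p" and unit: "det B * d = 1" and v: "v \<in> left_kernel B"
  shows "v = 0\<^sub>v p"
proof -
  have v_car: "v \<in> carrier_vec p" and Bv: "transpose_mat B *\<^sub>v v = 0\<^sub>v p"
    using v B unfolding left_kernel_def by auto
  have Bt: "transpose_mat B \<in> carrier_mat p p"
    using B by simp
  have "det B \<cdot>\<^sub>v v = (adj_mat (transpose_mat B) * transpose_mat B) *\<^sub>v v"
    unfolding adj_mat(3)[OF Bt] det_transpose[OF B] using v_car by (rule smult_one_mat_mult_vec[symmetric])
  also have "\<dots> = adj_mat (transpose_mat B) *\<^sub>v (transpose_mat B *\<^sub>v v)"
    using adj_mat(1)[OF Bt] Bt v_car by (rule assoc_mult_mat_vec)
  also have "\<dots> = 0\<^sub>v p"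
    unfolding Bv using adj_mat(1)[OF Bt] by (intro eq_vecI) auto
  finally have det_v: "det B \<cdot>\<^sub>v v = 0\<^sub>v p" .
  have "v = (d * det B) \<cdot>\<^sub>v v"
    using unit v_car by (simp add: mult.commute)
  also have "\<dots> = d \<cdot>\<^sub>v (det B \<cdot>\<^sub>v v)"
    by (simp add: smult_smult_assoc)
  also have "\<dots> = 0\<^sub>v p"
    unfolding det_v by (intro eq_vecI) simp_all
  finally show ?thesis .
qed

lemma cofactor_last_col_select_cols:
  assumes "\<forall>l<p. f l < dim_col A" and "k < Suc p" and "dim_row A = Suc p"
  shows "cofactor (select_cols A (Suc p) f) k p = (-1) ^ (k + p) * det (select_cols (delete_row A k) p f)"
proof -
  have "mat_delete (select_cols A (Suc p) f) k p = select_cols (delete_row A k) p f"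
    using assms
    by (intro eq_matI) (auto simp: mat_delete_def select_cols_def delete_row_def insert_index_def)
  then show ?thesis
    unfolding cofactor_def by simp
qed

lemma cofactor_vec_in_left_kernel:
  assumes A: "A \<in> carrier_mat (Suc p) n"
    and minors: "\<forall>g. (\<forall>l<Suc p. g l < n) \<longrightarrow> det (select_cols A (Suc p) g) = 0"
    and f: "\<forall>l<p. f l < n"
  shows "vec (Suc p) (\<lambda>i. cofactor (select_cols A (Suc p) f) i p) \<in> left_kernel A"
    (is "?w \<in> _")
proof -
  have cof: "cofactor (select_cols A (Suc p) (f(p := j))) i p = cofactor (select_cols A (Suc p) f) i p"
    for i j
  proof -
    have "mat_delete (select_cols A (Suc p) (f(p := j))) i p = mat_delete (select_cols A (Suc p) f) i p"
      by (intro eq_matI) (auto simp: mat_delete_def select_cols_def insert_index_def)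
    then show ?thesis
      unfolding cofactor_def by simp
  qed
  have "(\<Sum>i<Suc p. A $$ (i, j) * ?w $ i) = 0" if j: "j < n" for j
  proof -
    have "(\<Sum>i<Suc p. A $$ (i, j) * ?w $ i)
        = (\<Sum>i<Suc p. select_cols A (Suc p) (f(p := j)) $$ (i, p) * cofactor (select_cols A (Suc p) (f(p := j))) i p)"
      using A by (intro sum.cong) (auto simp: cof)
    also have "\<dots> = det (select_cols A (Suc p) (f(p := j)))"
      using A by (intro laplace_expansion_column[symmetric]) auto
    also have "\<dots> = 0"
      using minors f j by (simp add: less_Suc_eq)
    finally show ?thesis .
  qed
  then show ?thesis
    unfolding left_kernel_iff[OF A] by simp
qed

lemma free_rank_one_if_unit_coordinate:
  assumes K: "K \<subseteq> carrier_vec r" and w: "w \<in> K" and k: "k < r" and unit: "w $ k * e = 1"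
    and closed: "\<And>v c. v \<in> K \<Longrightarrow> v - c \<cdot>\<^sub>v w \<in> K"
    and coordinate: "\<And>u. u \<in> K \<Longrightarrow> u $ k = 0 \<Longrightarrow> u = 0\<^sub>v r"
  shows "free_rank_one K"
  unfolding free_rank_one_def
proof (intro bexI[OF _ w] ballI ex1I)
  have w_car: "w \<in> carrier_vec r"
    using K w by blast
  fix v assume v: "v \<in> K"
  then have v_car: "v \<in> carrier_vec r"
    using K by blast
  let ?c = "v $ k * e"
  have "(v - ?c \<cdot>\<^sub>v w) $ k = 0"
    using v_car w_car k unit by (simp add: mult.assoc mult.commute[of e])
  then have "v - ?c \<cdot>\<^sub>v w = 0\<^sub>v r"
    using closed[OF v] coordinate by blast
  then show "v = ?c \<cdot>\<^sub>v w"
    using v_car w_car by (intro eq_vecI) (auto simp: vec_eq_iff)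
  fix c assume "v = c \<cdot>\<^sub>v w"
  then have "v $ k * e = c * (w $ k * e)"
    using w_car k by (simp add: mult.assoc)
  then show "c = ?c"
    using unit by simp
qed

lemma zero_vec_if_delete_entry_zero:
  assumes u: "u \<in> carrier_vec (Suc p)" and k: "k \<le> p"
    and u_k: "u $ k = 0" and del: "delete_entry u k = 0\<^sub>v p"
  shows "u = 0\<^sub>v (Suc p)"
proof (rule eq_vecI)
  fix i assume "i < dim_vec (0\<^sub>v (Suc p))"
  then have i: "i < Suc p" by simp
  show "u $ i = 0\<^sub>v (Suc p) $ i"
  proof (cases "i = k")
    case False
    then have "delete_index k i < p" and "insert_index k (delete_index k i) = i"
      using i k by (auto simp: delete_index_def insert_delete_index)
    then show ?thesis
      using arg_cong[OF del, of "\<lambda>x. x $ delete_index k i"] u i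
      by (simp add: delete_entry_def)
  qed (use u_k i in simp)
qed (use u in simp)

lemma free_rank_one_left_kernel_if_unit_minor:
  assumes A: "A \<in> carrier_mat (Suc p) n"
    and minors: "\<forall>g. (\<forall>l<Suc p. g l < n) \<longrightarrow> det (select_cols A (Suc p) g) = 0"
    and k: "k \<le> p" and f: "\<forall>l<p. f l < n"
    and unit: "det (select_cols (delete_row A k) p f) * d = 1"
  shows "free_rank_one (left_kernel A)"
proof -
  let ?N = "select_cols (delete_row A k) p f"
  define w where "w = vec (Suc p) (\<lambda>i. cofactor (select_cols A (Suc p) f) i p)"
  have w: "w \<in> left_kernel A"
    unfolding w_def by (rule cofactor_vec_in_left_kernel[OF A minors f])
  have "w $ k = (-1) ^ (k + p) * det ?N"
    using cofactor_last_col_select_cols[of p f A k] A f k by (simp add: w_def)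
  then have w_unit: "w $ k * ((-1) ^ (k + p) * d) = 1"
    using unit by (simp add: mult.assoc mult.left_commute[of "det ?N"] power_mult_distrib[symmetric])
  have delete_row_A: "delete_row A k \<in> carrier_mat p n"
    using A by simp
  have N: "?N \<in> carrier_mat p p"
    using delete_row_A by simp
  show ?thesis
  proof (rule free_rank_one_if_unit_coordinate[OF _ w _ w_unit])
    show "left_kernel A \<subseteq> carrier_vec (Suc p)"
      using A unfolding left_kernel_def by auto
    show "k < Suc p"
      using k by simp
    show "v - c \<cdot>\<^sub>v w \<in> left_kernel A" if "v \<in> left_kernel A" for v c
      using A that w by (rule left_kernel_diff_smult)
    show "u = 0\<^sub>v (Suc p)" if u: "u \<in> left_kernel A" and u_k: "u $ k = 0" for u
    proof -
      have "delete_entry u k \<in> left_kernel (delete_row A k)"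
        using A k u u_k by (rule delete_entry_left_kernel)
      then have "delete_entry u k \<in> left_kernel ?N"
        using delete_row_A f by (intro left_kernel_select_cols)
      then have "delete_entry u k = 0\<^sub>v p"
        using N unit by (intro left_kernel_trivial_if_det_unit)
      moreover have "u \<in> carrier_vec (Suc p)"
        using A u unfolding left_kernel_def by auto
      ultimately show ?thesis
        using k u_k by (intro zero_vec_if_delete_entry_zero)
    qed
  qed
qed

section \<open>A unit minor over a local ring\<close>

lemma rows_indep_mod_row_entry_notin:
  fixes B :: "'a::comm_ring_1 mat"
  assumes "maximal_ideal m" and "rows_indep_mod m B S" and "k \<in> S" and "finite S"
  obtains j where "j < dim_col B" and "B $$ (k, j) \<notin> m"
proof -
  define c where "c i = (if i = k then 1 else 0 :: 'a)" for i
  have "(\<Sum>i\<in>S. c i * B $$ (i, j)) = B $$ (k, j)" for j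
    using assms(3,4) unfolding c_def by (simp add: if_distrib[of "\<lambda>x. x * _"] cong: if_cong)
  moreover have "c k \<notin> m"
    using maximal_ideal_one_notin[OF assms(1)] unfolding c_def by simp
  ultimately show ?thesis
    using assms(2,3) that unfolding rows_indep_mod_def by metis
qed

lemma rows_indep_mod_subtract_last_row:
  fixes B :: "'a::comm_ring_1 mat"
  assumes B: "B \<in> carrier_mat (Suc p) n" and indep: "rows_indep_mod m B {..<Suc p}"
  shows "rows_indep_mod m (mat p n (\<lambda>(i, j). B $$ (i, j) - \<mu> i * B $$ (p, j))) {..<p}"
    (is "rows_indep_mod m ?B' _")
  unfolding rows_indep_mod_def
proof (intro allI impI ballI)
  fix c i
  assume rel: "\<forall>j<dim_col ?B'. (\<Sum>i\<in>{..<p}. c i * ?B' $$ (i, j)) \<in> m" and i: "i \<in> {..<p}"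
  define c' where "c' i = (if i < p then c i else - (\<Sum>i<p. c i * \<mu> i))" for i
  have "(\<Sum>i<Suc p. c' i * B $$ (i, j)) = (\<Sum>i<p. c i * (B $$ (i, j) - \<mu> i * B $$ (p, j)))" for j
    unfolding c'_def
    by (simp add: right_diff_distrib sum_subtractf sum_distrib_right mult.assoc)
  then have "\<forall>i\<in>{..<Suc p}. c' i \<in> m"
    using indep rel B unfolding rows_indep_mod_def by simp
  then have "c' i \<in> m"
    using i by simp
  then show "c i \<in> m"
    using i by (simp add: c'_def)
qed

lemma det_subtract_last_row:
  fixes M :: "'a::comm_ring_1 mat"
  assumes M: "M \<in> carrier_mat (Suc p) (Suc p)"
  shows "det (mat (Suc p) (Suc p) (\<lambda>(i, l). if i < p then M $$ (i, l) - \<mu> i * M $$ (p, l) else M $$ (p, l)))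
    = det M" (is "det ?E = _")
proof -
  define P :: "'a mat" where
    "P = mat (Suc p) (Suc p) (\<lambda>(i, l). if i = l then 1 else if l = p then - \<mu> i else 0)"
  have P: "P \<in> carrier_mat (Suc p) (Suc p)"
    unfolding P_def by simp
  have "det P = prod_list (diag_mat P)"
    by (rule det_upper_triangular[OF _ P]) (auto simp: upper_triangular_def P_def)
  also have "\<dots> = 1"
    unfolding prod_list_diag_prod by (simp add: P_def)
  finally have det_P: "det P = 1" .
  have "P * M = ?E"
  proof (rule eq_matI)
    fix i l assume "i < dim_row ?E" and "l < dim_col ?E"
    then have i: "i < Suc p" and l: "l < Suc p" by simp_all
    have "(P * M) $$ (i, l) = (\<Sum>k<Suc p. P $$ (i, k) * M $$ (k, l))"
      using i l M P by (simp add: scalar_prod_def atLeast0LessThan)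
    also have "\<dots> = (\<Sum>k<Suc p. (if k = i then M $$ (i, l) else 0)
                              + (if k = p \<and> i < p then - \<mu> i * M $$ (p, l) else 0))"
      using i by (intro sum.cong) (auto simp: P_def)
    also have "\<dots> = ?E $$ (i, l)"
      using i l by (auto simp: sum.distrib less_Suc_eq)
    finally show "(P * M) $$ (i, l) = ?E $$ (i, l)" .
  qed (use P M in simp_all)
  then show ?thesis
    using det_mult[OF P M] det_P by simp
qed

lemma det_last_col_zero_above_diag:
  fixes M :: "'a::comm_ring_1 mat"
  assumes M: "M \<in> carrier_mat (Suc p) (Suc p)" and zero: "\<forall>i<p. M $$ (i, p) = 0"
  shows "det M = M $$ (p, p) * det (mat_delete M p p)"
proof -
  have "det M = (\<Sum>i<Suc p. M $$ (i, p) * cofactor M i p)"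
    using M by (intro laplace_expansion_column) auto
  also have "\<dots> = M $$ (p, p) * cofactor M p p"
    using zero by simp
  also have "cofactor M p p = det (mat_delete M p p)"
    unfolding cofactor_def by (simp flip: mult_2)
  finally show ?thesis .
qed

lemma exists_unit_minor_if_rows_indep_mod:
  fixes B :: "'a::comm_ring_1 mat"
  assumes local: "local_ring TYPE('a)" and m: "maximal_ideal m"
    and "B \<in> carrier_mat p n" and "rows_indep_mod m B {..<p}"
  shows "\<exists>f. (\<forall>l<p. f l < n) \<and> det (select_cols B p f) \<notin> m"
  using assms(3,4)
proof (induction p arbitrary: B)
  case 0
  then show ?case
    using maximal_ideal_one_notin[OF m] by (simp add: select_cols_def)
next
  case (Suc p)
  obtain j0 where j0: "j0 < n" and pivot: "B $$ (p, j0) \<notin> m"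
    using rows_indep_mod_row_entry_notin[OF m Suc.prems(2), of p] Suc.prems(1) by auto
  obtain u where u: "B $$ (p, j0) * u = 1"
    using local_ring_unit_if_notin_maximal_ideal[OF local m pivot] .
  define \<mu> where "\<mu> i = B $$ (i, j0) * u" for i
  define B' where "B' = mat p n (\<lambda>(i, j). B $$ (i, j) - \<mu> i * B $$ (p, j))"
  have "rows_indep_mod m B' {..<p}"
    unfolding B'_def using Suc.prems by (rule rows_indep_mod_subtract_last_row)
  then obtain f where f: "\<forall>l<p. f l < n" and minor': "det (select_cols B' p f) \<notin> m"
    using Suc.IH[of B'] unfolding B'_def by auto
  define M where "M = select_cols B (Suc p) (f(p := j0))"
  have M: "M \<in> carrier_mat (Suc p) (Suc p)"
    using Suc.prems(1) unfolding M_def by simp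
  define M' where
    "M' = mat (Suc p) (Suc p) (\<lambda>(i, l). if i < p then M $$ (i, l) - \<mu> i * M $$ (p, l) else M $$ (p, l))"
  have "det M = det M'"
    unfolding M'_def using M by (rule det_subtract_last_row[symmetric])
  also have "\<dots> = M' $$ (p, p) * det (mat_delete M' p p)"
    by (rule det_last_col_zero_above_diag)
       (use Suc.prems(1) u in \<open>auto simp: M'_def M_def \<mu>_def mult.assoc mult.commute[of u]\<close>)
  also have "mat_delete M' p p = select_cols B' p f"
    using Suc.prems(1) f
    by (intro eq_matI) (auto simp: mat_delete_def M'_def M_def B'_def insert_index_def)
  also have "M' $$ (p, p) = B $$ (p, j0)"
    using Suc.prems(1) by (simp add: M'_def M_def)
  finally have "u * det M = det (select_cols B' p f)"
    using u by (simp add: mult.assoc[symmetric] mult.commute[of u])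
  then have "det M \<notin> m"
    using minor' m unfolding maximal_ideal_def is_ideal_def by metis
  moreover have "\<forall>l<Suc p. (f(p := j0)) l < n"
    using f j0 by (simp add: less_Suc_eq)
  ultimately show ?case
    unfolding M_def by blast
qed

lemma rank_mod_witness:
  obtains S where "S \<subseteq> {..<dim_row A}" and "rows_indep_mod m A S" and "card S = rank_mod m A"
proof -
  define T where "T = {card S | S. S \<subseteq> {..<dim_row A} \<and> rows_indep_mod m A S}"
  have "T \<subseteq> card ` Pow {..<dim_row A}"
    unfolding T_def by auto
  then have "finite T"
    by (rule finite_subset) simp
  moreover have "card {} \<in> T"
    unfolding T_def rows_indep_mod_def by (intro CollectI exI[of _ "{}"]) simp
  ultimately have "Max T \<in> T"
    by (intro Max_in) auto
  then show ?thesis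
    using that unfolding T_def rank_mod_def by auto
qed

lemma rows_indep_mod_delete_row:
  assumes A: "A \<in> carrier_mat (Suc p) n" and k: "k \<le> p"
    and indep: "rows_indep_mod m A ({..<Suc p} - {k})"
  shows "rows_indep_mod m (delete_row A k) {..<p}"
  unfolding rows_indep_mod_def
proof (intro allI impI ballI)
  fix c i
  assume rel: "\<forall>j<dim_col (delete_row A k). (\<Sum>i\<in>{..<p}. c i * delete_row A k $$ (i, j)) \<in> m"
    and i: "i \<in> {..<p}"
  have image: "insert_index k ` {..<p} = {..<Suc p} - {k}"
    using insert_index_image[of k p] k by (simp add: lessThan_atLeast0)
  define c' where "c' s = c (delete_index k s)" for s
  have "(\<Sum>s\<in>{..<Suc p} - {k}. c' s * A $$ (s, j)) = (\<Sum>i<p. c i * delete_row A k $$ (i, j))"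
    if "j < n" for j
    unfolding image[symmetric] using A that
    by (simp add: sum.reindex[OF insert_index_inj_on] c'_def delete_row_def)
  then have "\<forall>s\<in>{..<Suc p} - {k}. c' s \<in> m"
    using indep rel A unfolding rows_indep_mod_def by (simp add: delete_row_def)
  moreover have "insert_index k i \<in> {..<Suc p} - {k}"
    using image i by blast
  ultimately show "c i \<in> m"
    unfolding c'_def by (metis delete_insert_index)
qed

lemma corank_mod_one_obtain_row:
  assumes A: "A \<in> carrier_mat r n" and corank: "corank_mod m A = 1"
  obtains p k where "r = Suc p" and "k \<le> p" and "rows_indep_mod m (delete_row A k) {..<p}"
proof -
  obtain S where S: "S \<subseteq> {..<r}" and indep: "rows_indep_mod m A S" and card_S: "card S = rank_mod m A"
    using rank_mod_witness[of A m] A by auto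
  define p where "p = card S"
  have r: "r = Suc p"
    using corank A card_S unfolding corank_mod_def p_def by simp
  have "card ({..<r} - S) = 1"
    using S r by (simp add: card_Diff_subset finite_subset p_def)
  then obtain k where "{..<r} - S = {k}"
    by (rule card_1_singletonE)
  then have "k \<le> p" and "S = {..<Suc p} - {k}"
    using S r by auto
  then have "rows_indep_mod m (delete_row A k) {..<p}"
    using A indep r by (intro rows_indep_mod_delete_row) auto
  with r \<open>k \<le> p\<close> show ?thesis
    using that by blast
qed

theorem lemma4p2p2:
  fixes A :: "'a::comm_ring_1 mat" and m :: "'a set" and r n :: nat
  assumes "local_ring TYPE('a)"
    and "maximal_ideal m"
    and "r \<le> n"
    and "A \<in> carrier_mat r n"
    and "\<forall>J. J \<subseteq> {..<n} \<and> card J = r \<longrightarrow> det (submatrix A {..<r} J) = 0"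
    and "corank_mod m A = 1"
  shows "free_rank_one (left_kernel A)"
proof -
  have A: "A \<in> carrier_mat r n"
    using assms(4) .
  obtain p k where r: "r = Suc p" and k: "k \<le> p" and indep: "rows_indep_mod m (delete_row A k) {..<p}"
    using A assms(6) by (rule corank_mod_one_obtain_row)
  have "delete_row A k \<in> carrier_mat p n"
    using A r by simp
  then obtain f where f: "\<forall>l<p. f l < n" and minor: "det (select_cols (delete_row A k) p f) \<notin> m"
    using exists_unit_minor_if_rows_indep_mod[OF assms(1,2) _ indep] by blast
  obtain d where "det (select_cols (delete_row A k) p f) * d = 1"
    using local_ring_unit_if_notin_maximal_ideal[OF assms(1,2) minor] .
  moreover have "\<forall>g. (\<forall>l<Suc p. g l < n) \<longrightarrow> det (select_cols A (Suc p) g) = 0"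
    using det_select_cols_eq_0_if_maximal_minors_vanish[OF A assms(5)] r by simp
  ultimately show ?thesis
    using free_rank_one_left_kernel_if_unit_minor[of A p n k f] A r k f by simp
qed

end
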